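(* Consider the two-unicast wireline network ("butterfly network with co-located sinks") with nodes $\mathsf{S}_1,\mathsf{S}_2,\mathsf{M}_1,\mathsf{M}_2,\mathsf{D}$, where the single destination node $\mathsf{D}$ must decode both $W_1$ (from $\mathsf{S}_1$) and $W_2$ (from $\mathsf{S}_2$), and directed edges: edge 1 from $\mathsf{S}_1$ to $\mathsf{M}_1$, edge 2 from $\mathsf{S}_2$ to $\mathsf{M}_1$, edge 3 from $\mathsf{M}_1$ to $\mathsf{M}_2$, edge 4 from $\mathsf{S}_1$ to $\mathsf{D}$, edge 5 from $\mathsf{S}_2$ to $\mathsf{D}$, and one edge from $\mathsf{M}_2$ to $\mathsf{D}$ of capacity $\mathsf{C}_6+\mathsf{C}_7$, where edge $i$ has capacity $\mathsf{C}_i\ge0$ and $\mathsf{C}_6,\mathsf{C}_7\ge0$. Then the secure capacity region (the closure of the set of securely achievable rate pairs) is the set of nonnegative $(R_1,R_2)$ with $$R_1\le\min\{\mathsf{C}_1,\mathsf{C}_4\},\quad R_2\le \min\{\mathsf{C}_2,\mathsf{C}_5\},\quad R_1+R_2\le \min\{\mathsf{C}_3,\mathsf{C}_6+\mathsf{C}_7\}.$$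
   Context: Network model: a directed acyclic graph; each edge $e$ is a noiseless orthogonal channel of capacity $\mathsf{C}_e$ carrying symbols over $\mathbb{F}_q$; over $n$ channel uses edge $e$ carries $X_e^n$, received as $Y_e^n=X_e^n$. Source $\mathsf{S}_i$ has message $W_i$ (uniform, $q$-ary entropy $nR_i$, $W_1,W_2$ independent) and an independent unlimited private source of randomness $\Theta_i$. A rate pair is securely achievable if for some block length $n$ there are encoding functions—an edge leaving $\mathsf{S}_i$ carries a function of $(W_i,\Theta_i)$, any other edge a function of the symbols received on the incoming edges of its tail—and decoders at $\mathsf{D}$ (functions of the symbols on its incoming edges) recovering $W_1$ and $W_2$ with vanishing error probability, and, for a passive eavesdropper wiretapping any single edge (which one is unknown), $I(W_1,W_2;Z_e^n)<\epsilon_n$ with $\epsilon_n\to0$ for every edge $e$, where $Z_e^n=X_e^n$ (strong secrecy). *)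

theory Defs
  imports "HOL-Probability.Probability"
begin

text \<open>Symbols of F_q are represented by the naturals below q; a block of L symbols
  is a list of length L.\<close>

definition words :: "nat \<Rightarrow> nat \<Rightarrow> nat list set" where
  "words q L = {xs. length xs = L \<and> (\<forall>x\<in>set xs. x < q)}"

text \<open>Number of q-ary symbols an edge of capacity C carries in n channel uses.\<close>
definition edge_len :: "nat \<Rightarrow> real \<Rightarrow> nat" where
  "edge_len n C = nat \<lfloor>real n * C\<rfloor>"

definition msg_size :: "nat \<Rightarrow> nat \<Rightarrow> real \<Rightarrow> nat" where
  "msg_size q n R = nat \<lceil>real q powr (real n * R)\<rceil>"

text \<open>A code: private randomness of the two sources (arbitrary discrete
  distributions), edge encoders, and the two decoders at D.\<close>
record code =
  rnd1 :: "nat pmf"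
  rnd2 :: "nat pmf"
  enc1 :: "nat \<Rightarrow> nat \<Rightarrow> nat list"
  enc4 :: "nat \<Rightarrow> nat \<Rightarrow> nat list"
  enc2 :: "nat \<Rightarrow> nat \<Rightarrow> nat list"
  enc5 :: "nat \<Rightarrow> nat \<Rightarrow> nat list"
  enc3 :: "nat list \<Rightarrow> nat list \<Rightarrow> nat list"
  enc6 :: "nat list \<Rightarrow> nat list"
  dec1 :: "nat list \<Rightarrow> nat list \<Rightarrow> nat list \<Rightarrow> nat"
  dec2 :: "nat list \<Rightarrow> nat list \<Rightarrow> nat list \<Rightarrow> nat"

definition code_valid ::
  "nat \<Rightarrow> nat \<Rightarrow> nat \<Rightarrow> nat \<Rightarrow> nat \<Rightarrow> nat \<Rightarrow> nat \<Rightarrow> nat \<Rightarrow> nat \<Rightarrow> code \<Rightarrow> bool" where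
  "code_valid q M1 M2 L1 L2 L3 L4 L5 L6 c \<longleftrightarrow>
     (\<forall>w<M1. \<forall>t. enc1 c w t \<in> words q L1 \<and> enc4 c w t \<in> words q L4) \<and>
     (\<forall>w<M2. \<forall>t. enc2 c w t \<in> words q L2 \<and> enc5 c w t \<in> words q L5) \<and>
     (\<forall>x1\<in>words q L1. \<forall>x2\<in>words q L2. enc3 c x1 x2 \<in> words q L3) \<and>
     (\<forall>x3\<in>words q L3. enc6 c x3 \<in> words q L6)"

definition joint_dist :: "nat \<Rightarrow> nat \<Rightarrow> code \<Rightarrow> (nat \<times> nat \<times> nat \<times> nat) pmf" where
  "joint_dist M1 M2 c =
     bind_pmf (pmf_of_set {..<M1}) (\<lambda>w1.
     bind_pmf (pmf_of_set {..<M2}) (\<lambda>w2.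
     bind_pmf (rnd1 c) (\<lambda>t1.
     bind_pmf (rnd2 c) (\<lambda>t2. return_pmf (w1, w2, t1, t2)))))"

definition edge_sig :: "code \<Rightarrow> nat \<Rightarrow> nat \<times> nat \<times> nat \<times> nat \<Rightarrow> nat list" where
  "edge_sig c e \<omega> = (case \<omega> of (w1, w2, t1, t2) \<Rightarrow>
     (let x1 = enc1 c w1 t1; x2 = enc2 c w2 t2; x4 = enc4 c w1 t1; x5 = enc5 c w2 t2;
          x3 = enc3 c x1 x2; x6 = enc6 c x3 in
      if e = 1 then x1 else if e = 2 then x2 else if e = 3 then x3
      else if e = 4 then x4 else if e = 5 then x5 else x6))"

definition error_prob :: "nat \<Rightarrow> nat \<Rightarrow> code \<Rightarrow> real" where
  "error_prob M1 M2 c = measure_pmf.prob (joint_dist M1 M2 c)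
     {\<omega>. case \<omega> of (w1, w2, t1, t2) \<Rightarrow>
        (dec1 c (edge_sig c 4 \<omega>) (edge_sig c 5 \<omega>) (edge_sig c 6 \<omega>),
         dec2 c (edge_sig c 4 \<omega>) (edge_sig c 5 \<omega>) (edge_sig c 6 \<omega>)) \<noteq> (w1, w2)}"

definition mutual_info :: "('a \<times> 'b) pmf \<Rightarrow> real" where
  "mutual_info J = (\<Sum>ab\<in>set_pmf J. pmf J ab *
      log 2 (pmf J ab / (pmf (map_pmf fst J) (fst ab) * pmf (map_pmf snd J) (snd ab))))"

definition leakage :: "nat \<Rightarrow> nat \<Rightarrow> code \<Rightarrow> nat \<Rightarrow> real" where
  "leakage M1 M2 c e = mutual_info
     (map_pmf (\<lambda>\<omega>. case \<omega> of (w1, w2, t1, t2) \<Rightarrow> ((w1, w2), edge_sig c e \<omega>))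
        (joint_dist M1 M2 c))"

text \<open>Secure achievability (strong secrecy against a single wiretapped edge),
  with capacities C1..C5 of edges 1..5 and C6 of the edge M2 -> D.\<close>
definition sec_achievable ::
  "nat \<Rightarrow> real \<Rightarrow> real \<Rightarrow> real \<Rightarrow> real \<Rightarrow> real \<Rightarrow> real \<Rightarrow> real \<Rightarrow> real \<Rightarrow> bool" where
  "sec_achievable q C1 C2 C3 C4 C5 C6 R1 R2 \<longleftrightarrow> 0 \<le> R1 \<and> 0 \<le> R2 \<and>
     (\<exists>cs :: nat \<Rightarrow> code.
        (\<forall>n. code_valid q (msg_size q n R1) (msg_size q n R2)
               (edge_len n C1) (edge_len n C2) (edge_len n C3)
               (edge_len n C4) (edge_len n C5) (edge_len n C6) (cs n)) \<and>
        (\<lambda>n. error_prob (msg_size q n R1) (msg_size q n R2) (cs n)) \<longlonglongrightarrow> 0 \<and>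
        (\<forall>e\<in>{1..6}. (\<lambda>n. leakage (msg_size q n R1) (msg_size q n R2) (cs n) e) \<longlonglongrightarrow> 0))"

end

theory Submission
  imports Defs
begin

text \<open>Achievability is a one-time pad: each source draws a uniform key \<open>t\<close>, sends
  \<open>w + t mod M\<close> towards the relay and \<open>t\<close> directly to the destination, and the relay packs the
  two padded messages into one word. Every edge then carries either keys alone or padded messages
  alone; both are independent of the messages, so nothing leaks, and the destination decodes
  exactly as soon as the message sets fit into the edge alphabets.

  For the converse, the relay edge carries a function of edges 1 and 2, so \<open>W1\<close> is recovered
  (up to Fano's error term) from edge 1, edge 4 and the outputs of the independent second source.
  Hence \<open>H(W1) \<le> I(W1; X1) + H(X4) + o(n)\<close>, and vanishing leakage on edge 1 forces
  \<open>R1 \<le> C4\<close>; the other single-rate bounds are symmetric. For the sum rate, \<open>(W1, W2)\<close> is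
  recovered from edges 4, 5 and the relay edge, and by independence of the sources the leakages of
  edges 4 and 5 add up. Finally, the region is closed and each of its points is a limit of
  points strictly inside, which are achievable.\<close>

section \<open>Entropy of finitely supported distributions\<close>

definition pmf_entropy :: "'a pmf \<Rightarrow> real" where
  "pmf_entropy Q = (\<Sum>y\<in>set_pmf Q. - pmf Q y * ln (pmf Q y))"

lemma sum_set_pmf_map:
  assumes "finite (set_pmf Q)"
  shows "(\<Sum>y\<in>set_pmf (map_pmf f Q). pmf (map_pmf f Q) y * g y) = (\<Sum>x\<in>set_pmf Q. pmf Q x * g (f x))"
proof -
  have "(\<Sum>y\<in>set_pmf (map_pmf f Q). pmf (map_pmf f Q) y * g y) = measure_pmf.expectation (map_pmf f Q) g"
    using assms by (subst integral_measure_pmf_real) (auto simp: mult.commute)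
  also have "\<dots> = measure_pmf.expectation Q (\<lambda>x. g (f x))"
    by simp
  also have "\<dots> = (\<Sum>x\<in>set_pmf Q. pmf Q x * g (f x))"
    using assms by (subst integral_measure_pmf_real) (auto simp: mult.commute)
  finally show ?thesis .
qed

lemma pmf_entropy_map:
  assumes "finite (set_pmf Q)"
  shows "pmf_entropy (map_pmf f Q) = (\<Sum>x\<in>set_pmf Q. - pmf Q x * ln (pmf (map_pmf f Q) (f x)))"
  unfolding pmf_entropy_def using sum_set_pmf_map[OF assms, of f "\<lambda>y. - ln (pmf (map_pmf f Q) y)"]
  by simp

lemma sum_set_pmf_eq_measure:
  assumes "finite (set_pmf Q)"
  shows "(\<Sum>y\<in>set_pmf Q. pmf Q y * (if y \<in> A then c else 0)) = measure Q A * c"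
proof -
  have "(\<Sum>y\<in>set_pmf Q. pmf Q y * (if y \<in> A then c else 0)) = (\<Sum>y\<in>set_pmf Q. if y \<in> A then pmf Q y * c else 0)"
    by (rule sum.cong) auto
  also have "\<dots> = (\<Sum>y\<in>set_pmf Q \<inter> A. pmf Q y * c)"
    using assms by (rule sum.inter_restrict[symmetric])
  also have "\<dots> = (\<Sum>y\<in>set_pmf Q \<inter> A. pmf Q y) * c"
    by (rule sum_distrib_right[symmetric])
  also have "(\<Sum>y\<in>set_pmf Q \<inter> A. pmf Q y) = measure Q A"
    using assms measure_Int_set_pmf[of Q A] by (simp add: measure_measure_pmf_finite Int_commute)
  finally show ?thesis .
qed

lemma pmf_le_pmf_map: "pmf Q x \<le> pmf (map_pmf f Q) (f x)"
proof -
  have "pmf Q x = measure Q {x}"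
    by (simp add: measure_pmf_single)
  also have "\<dots> \<le> measure Q (f -` {f x})"
    by (rule measure_pmf.finite_measure_mono) auto
  finally show ?thesis
    by (simp add: pmf_map)
qed

lemma pmf_map_pos: "x \<in> set_pmf Q \<Longrightarrow> 0 < pmf (map_pmf f Q) (f x)"
  using pmf_le_pmf_map[of Q x f] by (simp add: pmf_positive)

lemma pmf_entropy_map_le:
  assumes "finite (set_pmf Q)"
  shows "pmf_entropy (map_pmf f Q) \<le> pmf_entropy Q"
  unfolding pmf_entropy_map[OF assms] unfolding pmf_entropy_def
proof (rule sum_mono)
  fix x assume "x \<in> set_pmf Q"
  then have "0 < pmf Q x"
    by (simp add: pmf_positive)
  then show "- pmf Q x * ln (pmf (map_pmf f Q) (f x)) \<le> - pmf Q x * ln (pmf Q x)"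
    using pmf_le_pmf_map[of Q x f] by (simp add: mult_left_mono)
qed

lemma pmf_entropy_le_cross_entropy:
  assumes "finite (set_pmf Q)" and r_pos: "\<And>y. y \<in> set_pmf Q \<Longrightarrow> 0 < r y"
    and "(\<Sum>y\<in>set_pmf Q. r y) \<le> 1"
  shows "pmf_entropy Q \<le> (\<Sum>y\<in>set_pmf Q. - pmf Q y * ln (r y))"
proof -
  have "(\<Sum>y\<in>set_pmf Q. - pmf Q y * ln (r y)) - pmf_entropy Q
        = (\<Sum>y\<in>set_pmf Q. - pmf Q y * ln (r y / pmf Q y))"
    unfolding pmf_entropy_def sum_subtractf[symmetric]
  proof (rule sum.cong)
    fix y assume "y \<in> set_pmf Q"
    then have "0 < r y" "0 < pmf Q y"
      using r_pos by (simp_all add: pmf_positive)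
    then have "ln (r y / pmf Q y) = ln (r y) - ln (pmf Q y)"
      by (simp add: ln_div)
    then show "- pmf Q y * ln (r y) - - pmf Q y * ln (pmf Q y) = - pmf Q y * ln (r y / pmf Q y)"
      by (simp only: right_diff_distrib)
  qed simp
  also have "\<dots> \<ge> (\<Sum>y\<in>set_pmf Q. pmf Q y - r y)"
  proof (rule sum_mono)
    fix y assume y: "y \<in> set_pmf Q"
    then have p: "0 < pmf Q y"
      by (simp add: pmf_positive)
    have "ln (r y / pmf Q y) \<le> r y / pmf Q y - 1"
      using p r_pos[OF y] by (intro ln_le_minus_one) simp
    then have "pmf Q y * ln (r y / pmf Q y) \<le> pmf Q y * (r y / pmf Q y - 1)"
      using p by (simp add: mult_left_mono)
    moreover have "pmf Q y * (r y / pmf Q y - 1) = r y - pmf Q y"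
      using p by (simp add: field_simps)
    ultimately show "pmf Q y - r y \<le> - pmf Q y * ln (r y / pmf Q y)"
      by simp
  qed
  also have "(\<Sum>y\<in>set_pmf Q. pmf Q y - r y) = 1 - (\<Sum>y\<in>set_pmf Q. r y)"
    using assms(1) by (simp add: sum_subtractf sum_pmf_eq_1)
  finally show ?thesis
    using assms(3) by simp
qed

lemma pmf_entropy_le_ln_card:
  assumes "finite A" "set_pmf Q \<subseteq> A"
  shows "pmf_entropy Q \<le> ln (real (card A))"
proof -
  have fin: "finite (set_pmf Q)"
    using assms finite_subset by blast
  have "card A > 0"
    using assms set_pmf_not_empty[of Q] by (auto simp: card_gt_0_iff)
  then have "pmf_entropy Q \<le> (\<Sum>y\<in>set_pmf Q. - pmf Q y * ln (1 / card A))"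
    using sum_mono2[OF assms, of "\<lambda>_. 1 / card A"]
    by (intro pmf_entropy_le_cross_entropy fin) auto
  also have "\<dots> = ln (real (card A))"
    using fin by (simp add: ln_div sum_distrib_right[symmetric] sum_pmf_eq_1)
  finally show ?thesis .
qed

lemma pmf_entropy_pair_le:
  assumes fin: "finite (set_pmf Q)"
  shows "pmf_entropy Q \<le> pmf_entropy (map_pmf fst Q) + pmf_entropy (map_pmf snd Q)"
proof -
  define r where "r y = pmf (map_pmf fst Q) (fst y) * pmf (map_pmf snd Q) (snd y)" for y
  have "(\<Sum>y\<in>set_pmf Q. r y) \<le> (\<Sum>y\<in>fst ` set_pmf Q \<times> snd ` set_pmf Q. r y)"
    using fin by (intro sum_mono2) (auto simp: r_def intro: rev_image_eqI)
  also have "\<dots> = (\<Sum>a\<in>fst ` set_pmf Q. pmf (map_pmf fst Q) a) * (\<Sum>b\<in>snd ` set_pmf Q. pmf (map_pmf snd Q) b)"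
    by (simp add: r_def sum_product sum.cartesian_product case_prod_beta)
  also have "\<dots> = 1"
    using fin by (simp add: sum_pmf_eq_1)
  finally have "pmf_entropy Q \<le> (\<Sum>y\<in>set_pmf Q. - pmf Q y * ln (r y))"
    by (intro pmf_entropy_le_cross_entropy fin) (simp_all add: r_def pmf_map_pos mult_pos_pos)
  also have "\<dots> = pmf_entropy (map_pmf fst Q) + pmf_entropy (map_pmf snd Q)"
    unfolding pmf_entropy_map[OF fin] sum.distrib[symmetric]
  proof (rule sum.cong[OF refl])
    fix y assume y: "y \<in> set_pmf Q"
    have "ln (r y) = ln (pmf (map_pmf fst Q) (fst y)) + ln (pmf (map_pmf snd Q) (snd y))"
      unfolding r_def using pmf_map_pos[OF y, of fst] pmf_map_pos[OF y, of snd] by (intro ln_mult_pos)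
    then show "- pmf Q y * ln (r y) = - pmf Q y * ln (pmf (map_pmf fst Q) (fst y))
        + - pmf Q y * ln (pmf (map_pmf snd Q) (snd y))"
      by (simp add: algebra_simps)
  qed
  finally show ?thesis .
qed

lemma pmf_entropy_pair_pmf:
  assumes "finite (set_pmf A)" "finite (set_pmf B)"
  shows "pmf_entropy (pair_pmf A B) = pmf_entropy A + pmf_entropy B"
proof -
  have fin: "finite (set_pmf (pair_pmf A B))"
    using assms by simp
  have "pmf_entropy (pair_pmf A B) = pmf_entropy (map_pmf fst (pair_pmf A B)) + pmf_entropy (map_pmf snd (pair_pmf A B))"
    unfolding pmf_entropy_map[OF fin] sum.distrib[symmetric] unfolding pmf_entropy_def
    by (intro sum.cong refl)
       (auto simp: pmf_pair ln_mult pmf_positive map_fst_pair_pmf map_snd_pair_pmf algebra_simps)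
  then show ?thesis
    by (simp add: map_fst_pair_pmf map_snd_pair_pmf)
qed

lemma pmf_entropy_pmf_of_set:
  assumes "finite S" "S \<noteq> {}"
  shows "pmf_entropy (pmf_of_set S) = ln (card S)"
  using assms by (simp add: pmf_entropy_def ln_div)

section \<open>Random variables on a finitely supported distribution\<close>

definition ent :: "'a pmf \<Rightarrow> ('a \<Rightarrow> 'b) \<Rightarrow> real" where
  "ent P X = pmf_entropy (map_pmf X P)"

definition mi :: "'a pmf \<Rightarrow> ('a \<Rightarrow> 'b) \<Rightarrow> ('a \<Rightarrow> 'c) \<Rightarrow> real" where
  "mi P X Y = ent P X + ent P Y - ent P (\<lambda>x. (X x, Y x))"

definition indep_rv :: "'a pmf \<Rightarrow> ('a \<Rightarrow> 'b) \<Rightarrow> ('a \<Rightarrow> 'c) \<Rightarrow> bool" where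
  "indep_rv P X Y \<longleftrightarrow> map_pmf (\<lambda>x. (X x, Y x)) P = pair_pmf (map_pmf X P) (map_pmf Y P)"

lemma indep_rv_map:
  assumes "indep_rv P X Y"
  shows "indep_rv P (\<lambda>x. f (X x)) (\<lambda>x. g (Y x))"
proof -
  have "map_pmf (\<lambda>x. (f (X x), g (Y x))) P = map_pmf (\<lambda>(a, b). (f a, g b)) (map_pmf (\<lambda>x. (X x, Y x)) P)"
    by (simp add: map_pmf_comp)
  also have "\<dots> = pair_pmf (map_pmf (\<lambda>x. f (X x)) P) (map_pmf (\<lambda>x. g (Y x)) P)"
    using assms unfolding indep_rv_def by (simp add: map_pair map_pmf_comp)
  finally show ?thesis
    unfolding indep_rv_def .
qed

lemma indep_rv_pair_pmf: "indep_rv (pair_pmf A B) (\<lambda>z. f (fst z)) (\<lambda>z. g (snd z))"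
proof -
  have "indep_rv (pair_pmf A B) fst snd"
    by (simp add: indep_rv_def map_fst_pair_pmf map_snd_pair_pmf)
  then show ?thesis
    by (rule indep_rv_map)
qed

lemma ent_le_of_fun:
  assumes "finite (set_pmf P)" and "\<And>x. x \<in> set_pmf P \<Longrightarrow> X x = f (Y x)"
  shows "ent P X \<le> ent P Y"
proof -
  have "map_pmf X P = map_pmf f (map_pmf Y P)"
    unfolding map_pmf_comp using assms(2) by (rule map_pmf_cong[OF refl])
  then show ?thesis
    unfolding ent_def using assms(1) by (simp add: pmf_entropy_map_le)
qed

lemma ent_eq_of_fun:
  assumes "finite (set_pmf P)"
    and "\<And>x. x \<in> set_pmf P \<Longrightarrow> X x = f (Y x)" "\<And>x. x \<in> set_pmf P \<Longrightarrow> Y x = g (X x)"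
  shows "ent P X = ent P Y"
  using ent_le_of_fun[of P X f Y] ent_le_of_fun[of P Y g X] assms by fastforce

lemma ent_pair_le:
  assumes "finite (set_pmf P)"
  shows "ent P (\<lambda>x. (X x, Y x)) \<le> ent P X + ent P Y"
  using pmf_entropy_pair_le[of "map_pmf (\<lambda>x. (X x, Y x)) P"] assms
  by (simp add: ent_def map_pmf_comp)

lemma ent_indep:
  assumes "finite (set_pmf P)" "indep_rv P X Y"
  shows "ent P (\<lambda>x. (X x, Y x)) = ent P X + ent P Y"
  using assms unfolding indep_rv_def ent_def by (simp add: pmf_entropy_pair_pmf)

lemma ent_le_ln_card:
  assumes "finite S" "\<And>x. x \<in> set_pmf P \<Longrightarrow> X x \<in> S"
  shows "ent P X \<le> ln (real (card S))"
  unfolding ent_def using assms by (intro pmf_entropy_le_ln_card) auto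

lemma ent_uniform:
  assumes "finite S" "S \<noteq> {}" "map_pmf X P = pmf_of_set S"
  shows "ent P X = ln (real (card S))"
  using assms by (simp add: ent_def pmf_entropy_pmf_of_set)

lemma ent_error_revealing_le:
  fixes W D :: "'a \<Rightarrow> 'w"
  assumes fin: "finite (set_pmf P)" and S: "finite S" "\<And>x. x \<in> set_pmf P \<Longrightarrow> W x \<in> S"
  shows "ent P (\<lambda>x. if D x \<noteq> W x then Some (W x) else None)
           \<le> measure P {x. D x \<noteq> W x} * ln (real (card S)) + ln 2"
proof -
  define V where "V = (\<lambda>x. if D x \<noteq> W x then Some (W x) else None)"
  define Q where "Q = map_pmf V P"
  define T where "T = insert None (Some ` S)"
  define r :: "'w option \<Rightarrow> real" where "r y = (if y = None then 1 / 2 else 1 / (2 * card S))" for y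
  have nonempty: "S \<noteq> {}"
    using S(2) set_pmf_not_empty[of P] by blast
  then have card: "0 < card S"
    using S(1) by (simp add: card_gt_0_iff)
  have QT: "set_pmf Q \<subseteq> T" and finT: "finite T"
    using S by (auto simp: Q_def T_def V_def)
  have finQ: "finite (set_pmf Q)"
    using QT finT by (rule finite_subset)
  have "(\<Sum>y\<in>set_pmf Q. r y) \<le> (\<Sum>y\<in>T. r y)"
    using QT finT by (intro sum_mono2) (auto simp: r_def)
  also have "\<dots> = 1"
    using S(1) nonempty by (simp add: T_def r_def sum.reindex)
  finally have "pmf_entropy Q \<le> (\<Sum>y\<in>set_pmf Q. - pmf Q y * ln (r y))"
    using card by (intro pmf_entropy_le_cross_entropy finQ) (auto simp: r_def)
  also have "\<dots> = (\<Sum>y\<in>set_pmf Q. pmf Q y * ln 2 + pmf Q y * (if y = None then 0 else ln (real (card S))))"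
  proof (rule sum.cong[OF refl])
    fix y :: "'w option"
    have ln_r: "ln (r y) = - ln 2 - (if y = None then 0 else ln (real (card S)))"
      using card by (simp add: r_def ln_divide_pos ln_mult_pos)
    show "- pmf Q y * ln (r y) = pmf Q y * ln 2 + pmf Q y * (if y = None then 0 else ln (real (card S)))"
      unfolding ln_r by (simp add: algebra_simps)
  qed
  also have "\<dots> = (\<Sum>y\<in>set_pmf Q. pmf Q y * (if y = None then 0 else ln (real (card S)))) + ln 2"
    using finQ by (simp add: sum.distrib sum_distrib_right[symmetric] sum_pmf_eq_1)
  also have "(\<Sum>y\<in>set_pmf Q. pmf Q y * (if y = None then 0 else ln (real (card S)))) =
      measure Q {y. y \<noteq> None} * ln (real (card S))"
    using finQ by (subst sum_set_pmf_eq_measure[symmetric]) (auto intro: sum.cong)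
  also have "measure Q {y. y \<noteq> None} = measure P {x. D x \<noteq> W x}"
    by (simp add: Q_def V_def vimage_def)
  finally show ?thesis
    by (simp add: ent_def Q_def V_def)
qed

lemma mutual_info_eq_mi:
  assumes fin: "finite (set_pmf P)"
  shows "mutual_info (map_pmf (\<lambda>x. (X x, Y x)) P) = mi P X Y / ln 2"
proof -
  define J where "J = map_pmf (\<lambda>x. (X x, Y x)) P"
  have finJ: "finite (set_pmf J)"
    using fin by (simp add: J_def)
  have "mutual_info J * ln 2 = pmf_entropy (map_pmf fst J) + pmf_entropy (map_pmf snd J) - pmf_entropy J"
    unfolding mutual_info_def pmf_entropy_map[OF finJ] sum_distrib_right
    unfolding pmf_entropy_def sum_subtractf[symmetric] sum.distrib[symmetric]
  proof (rule sum.cong[OF refl])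
    fix z assume z: "z \<in> set_pmf J"
    have "ln (pmf J z / (pmf (map_pmf fst J) (fst z) * pmf (map_pmf snd J) (snd z))) =
        ln (pmf J z) - ln (pmf (map_pmf fst J) (fst z) * pmf (map_pmf snd J) (snd z))"
      using z by (intro ln_divide_pos) (simp_all add: pmf_positive pmf_map_pos)
    also have "\<dots> = ln (pmf J z) - ln (pmf (map_pmf fst J) (fst z)) - ln (pmf (map_pmf snd J) (snd z))"
      using z by (simp add: ln_mult_pos pmf_map_pos)
    finally have split_ln: "ln (pmf J z / (pmf (map_pmf fst J) (fst z) * pmf (map_pmf snd J) (snd z))) =
        ln (pmf J z) - ln (pmf (map_pmf fst J) (fst z)) - ln (pmf (map_pmf snd J) (snd z))" .
    show "pmf J z * log 2 (pmf J z / (pmf (map_pmf fst J) (fst z) * pmf (map_pmf snd J) (snd z))) * ln 2 =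
        - pmf J z * ln (pmf (map_pmf fst J) (fst z)) + - pmf J z * ln (pmf (map_pmf snd J) (snd z))
        - - pmf J z * ln (pmf J z)"
      unfolding log_def split_ln by (simp add: right_diff_distrib)
  qed
  moreover have "mi P X Y = pmf_entropy (map_pmf fst J) + pmf_entropy (map_pmf snd J) - pmf_entropy J"
    unfolding mi_def ent_def J_def by (simp add: map_pmf_comp)
  ultimately show ?thesis
    unfolding J_def[symmetric] by (simp add: eq_divide_eq)
qed

lemma mutual_info_pair_pmf: "mutual_info (pair_pmf A B) = 0"
  unfolding mutual_info_def map_fst_pair_pmf map_snd_pair_pmf
  by (rule sum.neutral) (auto simp: pmf_pair)

section \<open>Lower bounds on mutual information from decodability\<close>

lemma indep_rv_const: "indep_rv P X (\<lambda>_. c)"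
  by (simp add: indep_rv_def pair_return_pmf2 map_pmf_comp)

lemma indep_rv_commute:
  assumes "indep_rv P X Y"
  shows "indep_rv P Y X"
proof -
  have "map_pmf (\<lambda>x. (Y x, X x)) P = map_pmf (\<lambda>(a, b). (b, a)) (map_pmf (\<lambda>x. (X x, Y x)) P)"
    by (simp add: map_pmf_comp)
  then show ?thesis
    using assms unfolding indep_rv_def by (simp add: pair_commute_pmf[of "map_pmf Y P"])
qed

lemma mi_lower_bound_of_decoder:
  fixes W :: "'a \<Rightarrow> 'w"
  assumes fin: "finite (set_pmf P)" and S: "finite S" "\<And>x. x \<in> set_pmf P \<Longrightarrow> W x \<in> S"
    and dec: "\<And>x. x \<in> set_pmf P \<Longrightarrow> D x = \<psi> (A x) (B x) (Y x)"
    and indep: "indep_rv P (\<lambda>x. (W x, A x)) Y"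
  shows "ent P W - ent P B - measure P {x. D x \<noteq> W x} * ln (real (card S)) - ln 2 \<le> mi P W A"
proof -
  txt \<open>\<open>V\<close> reveals \<open>W\<close> exactly when the decoder errs, so \<open>W\<close> is a function of \<open>(A, B, Y, V)\<close>.\<close>
  define V where "V = (\<lambda>x. if D x \<noteq> W x then Some (W x) else None)"
  have W_recovered: "W x = (case V x of Some w \<Rightarrow> w | None \<Rightarrow> \<psi> (A x) (B x) (Y x))"
    if "x \<in> set_pmf P" for x
    using dec[OF that] by (simp add: V_def)
  have "indep_rv P A Y"
    using indep_rv_map[OF indep, of snd "\<lambda>y. y"] by simp
  then have AY: "ent P (\<lambda>x. (A x, Y x)) = ent P A + ent P Y"
    by (rule ent_indep[OF fin])
  have "ent P (\<lambda>x. (W x, A x)) + ent P Y = ent P (\<lambda>x. ((W x, A x), Y x))"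
    using ent_indep[OF fin indep] by simp
  also have "\<dots> \<le> ent P (\<lambda>x. ((A x, Y x), (B x, V x)))"
    using W_recovered
    by (intro ent_le_of_fun[OF fin, where f = "\<lambda>((a, y), (b, v)). ((case v of Some w \<Rightarrow> w | None \<Rightarrow> \<psi> a b y, a), y)"])
       simp
  also have "\<dots> \<le> ent P (\<lambda>x. (A x, Y x)) + ent P (\<lambda>x. (B x, V x))"
    by (rule ent_pair_le[OF fin])
  also have "ent P (\<lambda>x. (B x, V x)) \<le> ent P B + ent P V"
    by (rule ent_pair_le[OF fin])
  finally have "ent P (\<lambda>x. (W x, A x)) \<le> ent P A + ent P B + ent P V"
    unfolding AY by simp
  moreover have "ent P V \<le> measure P {x. D x \<noteq> W x} * ln (real (card S)) + ln 2"
    unfolding V_def using fin S by (rule ent_error_revealing_le)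
  ultimately show ?thesis
    unfolding mi_def by simp
qed

lemma mi_pair_of_indep:
  assumes fin: "finite (set_pmf P)"
    and indep: "indep_rv P (\<lambda>x. (W1 x, A1 x)) (\<lambda>x. (W2 x, A2 x))"
  shows "mi P (\<lambda>x. (W1 x, W2 x)) (\<lambda>x. (A1 x, A2 x)) = mi P W1 A1 + mi P W2 A2"
proof -
  have "ent P (\<lambda>x. (W1 x, W2 x)) = ent P W1 + ent P W2"
    using indep_rv_map[OF indep, of fst fst] by (simp add: ent_indep[OF fin])
  moreover have "ent P (\<lambda>x. (A1 x, A2 x)) = ent P A1 + ent P A2"
    using indep_rv_map[OF indep, of snd snd] by (simp add: ent_indep[OF fin])
  moreover have "ent P (\<lambda>x. ((W1 x, W2 x), (A1 x, A2 x))) = ent P (\<lambda>x. ((W1 x, A1 x), (W2 x, A2 x)))"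
    by (rule ent_eq_of_fun[OF fin, where f = "\<lambda>((w1, a1), (w2, a2)). ((w1, w2), (a1, a2))"
          and g = "\<lambda>((w1, w2), (a1, a2)). ((w1, a1), (w2, a2))"]) simp_all
  ultimately show ?thesis
    using ent_indep[OF fin indep] by (simp add: mi_def)
qed

lemma mi_add_indep_component:
  assumes fin: "finite (set_pmf P)" and indep: "indep_rv P (\<lambda>x. (W x, A x)) W'"
  shows "mi P (\<lambda>x. (W x, W' x)) A = mi P W A" and "mi P (\<lambda>x. (W' x, W x)) A = mi P W A"
proof -
  have "ent P (\<lambda>x. (W x, W' x)) = ent P W + ent P W'"
    using indep_rv_map[OF indep, of fst "\<lambda>y. y"] by (simp add: ent_indep[OF fin])
  moreover have "ent P (\<lambda>x. ((W x, W' x), A x)) = ent P (\<lambda>x. ((W x, A x), W' x))"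
    by (rule ent_eq_of_fun[OF fin, where f = "\<lambda>((w, a), w'). ((w, w'), a)"
          and g = "\<lambda>((w, w'), a). ((w, a), w')"]) simp_all
  ultimately show first: "mi P (\<lambda>x. (W x, W' x)) A = mi P W A"
    using ent_indep[OF fin indep] by (simp add: mi_def)
  have "ent P (\<lambda>x. (W' x, W x)) = ent P (\<lambda>x. (W x, W' x))"
    by (rule ent_eq_of_fun[OF fin, where f = "\<lambda>(w, w'). (w', w)" and g = "\<lambda>(w', w). (w, w')"]) simp_all
  moreover have "ent P (\<lambda>x. ((W' x, W x), A x)) = ent P (\<lambda>x. ((W x, W' x), A x))"
    by (rule ent_eq_of_fun[OF fin, where f = "\<lambda>((w, w'), a). ((w', w), a)"
          and g = "\<lambda>((w', w), a). ((w, w'), a)"]) simp_all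
  ultimately show "mi P (\<lambda>x. (W' x, W x)) A = mi P W A"
    using first by (simp add: mi_def)
qed

lemma words_eq: "words q L = {xs. set xs \<subseteq> {..<q} \<and> length xs = L}"
  unfolding words_def by auto

lemma finite_words [simp]: "finite (words q L)"
  unfolding words_eq by (rule finite_lists_length_eq) simp

lemma card_words: "card (words q L) = q ^ L"
  unfolding words_eq by (simp add: card_lists_length_eq)

lemma ent_le_words:
  assumes "\<And>x. x \<in> set_pmf P \<Longrightarrow> X x \<in> words q L" "0 < q"
  shows "ent P X \<le> L * ln q"
  using ent_le_ln_card[of "words q L" P X] assms by (simp add: card_words ln_realpow)

lemma mi_lower_bound_of_uniform_message:
  assumes fin: "finite (set_pmf P)" and S: "finite S" "S \<noteq> {}" "map_pmf W P = pmf_of_set S"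
    and dec: "\<And>x. x \<in> set_pmf P \<Longrightarrow> D x = \<psi> (A x) (B x) (Y x)"
    and indep: "indep_rv P (\<lambda>x. (W x, A x)) Y"
    and B: "\<And>x. x \<in> set_pmf P \<Longrightarrow> B x \<in> words q LB" "0 < q"
    and err: "measure P {x. D x \<noteq> W x} \<le> Pe"
  shows "ln (real (card S)) - real LB * ln (real q) - Pe * ln (real (card S)) - ln 2 \<le> mi P W A"
proof -
  have W: "W x \<in> S" if "x \<in> set_pmf P" for x
    using that S set_map_pmf[of W P] by (metis image_eqI set_pmf_of_set)
  have "ent P W - ent P B - measure P {x. D x \<noteq> W x} * ln (real (card S)) - ln 2 \<le> mi P W A"
    by (rule mi_lower_bound_of_decoder[where \<psi> = \<psi>, OF fin S(1) W dec indep])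
  moreover have "measure P {x. D x \<noteq> W x} * ln (real (card S)) \<le> Pe * ln (real (card S))"
    using S err by (intro mult_right_mono) (simp_all add: Suc_leI card_gt_0_iff)
  ultimately show ?thesis
    using ent_uniform[OF S] ent_le_words[where P = P and X = B, OF B] by linarith
qed

section \<open>The outputs of the two sources\<close>

lemma joint_dist_eq_pair:
  "joint_dist M1 M2 c = map_pmf (\<lambda>((w1, t1), (w2, t2)). (w1, w2, t1, t2))
     (pair_pmf (pair_pmf (pmf_of_set {..<M1}) (rnd1 c)) (pair_pmf (pmf_of_set {..<M2}) (rnd2 c)))"
  unfolding joint_dist_def pair_pmf_def map_pmf_def
  by (simp add: bind_assoc_pmf bind_return_pmf bind_commute_pmf[of "rnd1 c"])

definition source_dist :: "nat \<Rightarrow> nat pmf \<Rightarrow> (nat \<Rightarrow> nat \<Rightarrow> nat list) \<Rightarrow> (nat \<Rightarrow> nat \<Rightarrow> nat list)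
    \<Rightarrow> (nat \<times> nat list \<times> nat list) pmf" where
  "source_dist M rnd f g = map_pmf (\<lambda>(w, t). (w, f w t, g w t)) (pair_pmf (pmf_of_set {..<M}) rnd)"

definition observations :: "nat \<Rightarrow> nat \<Rightarrow> code \<Rightarrow> ((nat \<times> nat list \<times> nat list) \<times> nat \<times> nat list \<times> nat list) pmf" where
  "observations M1 M2 c = map_pmf (\<lambda>(w1, w2, t1, t2). ((w1, enc1 c w1 t1, enc4 c w1 t1), (w2, enc2 c w2 t2, enc5 c w2 t2)))
     (joint_dist M1 M2 c)"

definition messages :: "('a \<times> 'b) \<times> 'c \<times> 'd \<Rightarrow> 'a \<times> 'c" where
  "messages = (\<lambda>z. (fst (fst z), fst (snd z)))"

definition decoded :: "code \<Rightarrow> (nat \<times> nat list \<times> nat list) \<times> nat \<times> nat list \<times> nat list \<Rightarrow> nat \<times> nat" where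
  "decoded c = (\<lambda>((_, x1, x4), (_, x2, x5)).
     (dec1 c x4 x5 (enc6 c (enc3 c x1 x2)), dec2 c x4 x5 (enc6 c (enc3 c x1 x2))))"

lemma observations_eq_pair:
  "observations M1 M2 c = pair_pmf (source_dist M1 (rnd1 c) (enc1 c) (enc4 c)) (source_dist M2 (rnd2 c) (enc2 c) (enc5 c))"
  unfolding observations_def source_dist_def joint_dist_eq_pair map_pmf_comp map_pair[symmetric]
  by (rule map_pmf_cong) auto

lemma set_pmf_of_set_lessThan: "0 < M \<Longrightarrow> set_pmf (pmf_of_set {..<M::nat}) = {..<M}"
  by (rule set_pmf_of_set) auto

lemma pair_pmf_of_set:
  assumes "finite A" "A \<noteq> {}" "finite B" "B \<noteq> {}"
  shows "pair_pmf (pmf_of_set A) (pmf_of_set B) = pmf_of_set (A \<times> B)"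
proof (rule pmf_eqI)
  fix z :: "'a \<times> 'b"
  show "pmf (pair_pmf (pmf_of_set A) (pmf_of_set B)) z = pmf (pmf_of_set (A \<times> B)) z"
    using assms by (cases z) (simp add: pmf_pair card_cartesian_product indicator_def)
qed

lemma set_source_dist:
  assumes "0 < M" "\<And>w t. w < M \<Longrightarrow> f w t \<in> words q L \<and> g w t \<in> words q L'"
  shows "set_pmf (source_dist M rnd f g) \<subseteq> {..<M} \<times> words q L \<times> words q L'"
  using assms by (auto simp: source_dist_def set_pmf_of_set_lessThan)

lemma map_fst_source_dist: "0 < M \<Longrightarrow> map_pmf fst (source_dist M rnd f g) = pmf_of_set {..<M}"
  unfolding source_dist_def map_pmf_comp
  by (simp add: split_beta map_fst_pair_pmf flip: map_pmf_comp[of fst fst])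

lemma set_observations:
  assumes "code_valid q M1 M2 L1 L2 L3 L4 L5 L6 c" "0 < M1" "0 < M2"
  shows "set_pmf (observations M1 M2 c) \<subseteq> ({..<M1} \<times> words q L1 \<times> words q L4) \<times> ({..<M2} \<times> words q L2 \<times> words q L5)"
  using assms unfolding observations_eq_pair code_valid_def
  by (simp only: set_pair_pmf) (intro Sigma_mono set_source_dist; simp)

lemma finite_observations:
  assumes "code_valid q M1 M2 L1 L2 L3 L4 L5 L6 c" "0 < M1" "0 < M2"
  shows "finite (set_pmf (observations M1 M2 c))"
  using set_observations[OF assms] by (rule finite_subset) simp

lemma map_messages_observations:
  assumes "0 < M1" "0 < M2"
  shows "map_pmf (\<lambda>z. fst (fst z)) (observations M1 M2 c) = pmf_of_set {..<M1}"
    and "map_pmf (\<lambda>z. fst (snd z)) (observations M1 M2 c) = pmf_of_set {..<M2}"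
    and "map_pmf messages (observations M1 M2 c) = pmf_of_set ({..<M1} \<times> {..<M2})"
proof -
  show "map_pmf (\<lambda>z. fst (fst z)) (observations M1 M2 c) = pmf_of_set {..<M1}"
    using assms by (simp add: observations_eq_pair map_fst_source_dist map_fst_pair_pmf flip: map_pmf_comp)
  show "map_pmf (\<lambda>z. fst (snd z)) (observations M1 M2 c) = pmf_of_set {..<M2}"
    using assms by (simp add: observations_eq_pair map_fst_source_dist map_snd_pair_pmf flip: map_pmf_comp)
  have "map_pmf messages (observations M1 M2 c) =
      pair_pmf (map_pmf fst (source_dist M1 (rnd1 c) (enc1 c) (enc4 c))) (map_pmf fst (source_dist M2 (rnd2 c) (enc2 c) (enc5 c)))"
    unfolding observations_eq_pair map_pair[symmetric] messages_def by (rule map_pmf_cong) auto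
  then show "map_pmf messages (observations M1 M2 c) = pmf_of_set ({..<M1} \<times> {..<M2})"
    using assms by (simp add: map_fst_source_dist pair_pmf_of_set lessThan_empty_iff)
qed

lemma indep_observations: "indep_rv (observations M1 M2 c) (\<lambda>z. f (fst z)) (\<lambda>z. g (snd z))"
  unfolding observations_eq_pair by (rule indep_rv_pair_pmf)

lemma leakage_eq_mi:
  assumes fin: "finite (set_pmf (observations M1 M2 c))"
    and edge: "\<And>w1 w2 t1 t2. edge_sig c e (w1, w2, t1, t2) =
                 X ((w1, enc1 c w1 t1, enc4 c w1 t1), (w2, enc2 c w2 t2, enc5 c w2 t2))"
  shows "ln 2 * leakage M1 M2 c e = mi (observations M1 M2 c) messages X"
proof -
  have "leakage M1 M2 c e = mutual_info (map_pmf (\<lambda>z. (messages z, X z)) (observations M1 M2 c))"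
    unfolding leakage_def observations_def map_pmf_comp
    by (intro arg_cong[where f = mutual_info] map_pmf_cong) (auto simp: edge messages_def)
  then show ?thesis
    using mutual_info_eq_mi[OF fin, of messages X] by simp
qed

lemma error_prob_eq_observations:
  "error_prob M1 M2 c = measure (observations M1 M2 c) {z. decoded c z \<noteq> messages z}"
  unfolding error_prob_def observations_def
  by (simp add: vimage_def edge_sig_def decoded_def messages_def split_beta)

section \<open>Converse\<close>

lemma code_leakage_lower_bounds:
  assumes valid: "code_valid q M1 M2 L1 L2 L3 L4 L5 L6 c" and pos: "0 < M1" "0 < M2" "0 < q"
  defines "Pe \<equiv> error_prob M1 M2 c" and "lk \<equiv> \<lambda>e. ln 2 * leakage M1 M2 c e"
  shows "ln M1 - L4 * ln q - Pe * ln M1 - ln 2 \<le> lk 1"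
    and "ln M1 - L1 * ln q - Pe * ln M1 - ln 2 \<le> lk 4"
    and "ln M2 - L5 * ln q - Pe * ln M2 - ln 2 \<le> lk 2"
    and "ln M2 - L2 * ln q - Pe * ln M2 - ln 2 \<le> lk 5"
    and "ln M1 + ln M2 - L6 * ln q - Pe * (ln M1 + ln M2) - ln 2 \<le> lk 4 + lk 5"
    and "ln M1 + ln M2 - L3 * ln q - Pe * (ln M1 + ln M2) - ln 2 \<le> lk 4 + lk 5"
proof -
  define Q where "Q = observations M1 M2 c"
  define w1 x1 x4 w2 x2 x5 :: "(nat \<times> nat list \<times> nat list) \<times> nat \<times> nat list \<times> nat list \<Rightarrow> _"
    where "w1 = (\<lambda>z. fst (fst z))" and "x1 = (\<lambda>z. fst (snd (fst z)))" and "x4 = (\<lambda>z. snd (snd (fst z)))"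
      and "w2 = (\<lambda>z. fst (snd z))" and "x2 = (\<lambda>z. fst (snd (snd z)))" and "x5 = (\<lambda>z. snd (snd (snd z)))"
  note sel_defs = w1_def x1_def x4_def w2_def x2_def x5_def
  have fin: "finite (set_pmf Q)"
    unfolding Q_def using valid pos(1,2) by (rule finite_observations)
  have words: "x1 z \<in> words q L1" "x4 z \<in> words q L4" "x2 z \<in> words q L2" "x5 z \<in> words q L5"
      "enc3 c (x1 z) (x2 z) \<in> words q L3" "enc6 c (enc3 c (x1 z) (x2 z)) \<in> words q L6"
    if "z \<in> set_pmf Q" for z
    using set_observations[OF valid pos(1,2)] valid that
    by (auto simp: Q_def sel_defs code_valid_def)
  have uniform: "map_pmf w1 Q = pmf_of_set {..<M1}" "map_pmf w2 Q = pmf_of_set {..<M2}"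
      "map_pmf messages Q = pmf_of_set ({..<M1} \<times> {..<M2})"
    unfolding Q_def sel_defs using map_messages_observations[OF pos(1,2)] by simp_all
  have messages: "messages = (\<lambda>z. (w1 z, w2 z))"
    by (simp add: messages_def sel_defs)
  have decoded: "decoded c z = (dec1 c (x4 z) (x5 z) (enc6 c (enc3 c (x1 z) (x2 z))),
                               dec2 c (x4 z) (x5 z) (enc6 c (enc3 c (x1 z) (x2 z))))" for z
    by (simp add: decoded_def sel_defs split_beta)
  have err: "measure Q {z. decoded c z \<noteq> messages z} = Pe"
    unfolding Q_def Pe_def by (rule error_prob_eq_observations[symmetric])
  have err1: "measure Q {z. fst (decoded c z) \<noteq> w1 z} \<le> Pe" and err2: "measure Q {z. snd (decoded c z) \<noteq> w2 z} \<le> Pe"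
    unfolding err[symmetric] messages by (intro measure_pmf.finite_measure_mono; force)+
  have leak: "lk 1 = mi Q messages x1" "lk 4 = mi Q messages x4" "lk 2 = mi Q messages x2" "lk 5 = mi Q messages x5"
    unfolding lk_def Q_def using fin[unfolded Q_def] by (intro leakage_eq_mi; simp add: edge_sig_def sel_defs)+
  have sides_indep: "indep_rv Q (\<lambda>z. f (w1 z, x1 z, x4 z)) (\<lambda>z. g (w2 z, x2 z, x5 z))" for f g
    using indep_observations[of M1 M2 c f g] by (simp add: Q_def sel_defs)
  have mi_own_message: "mi Q messages x1 = mi Q w1 x1" "mi Q messages x4 = mi Q w1 x4"
      "mi Q messages x2 = mi Q w2 x2" "mi Q messages x5 = mi Q w2 x5"
    unfolding messages using sides_indep[of "\<lambda>(w, x, _). (w, x)" fst] sides_indep[of "\<lambda>(w, _, x). (w, x)" fst]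
      indep_rv_commute[OF sides_indep[of fst "\<lambda>(w, x, _). (w, x)"]] indep_rv_commute[OF sides_indep[of fst "\<lambda>(w, _, x). (w, x)"]]
    by (simp_all add: mi_add_indep_component[OF fin])
  txt \<open>In each single-rate bound the wiretapped edge is \<open>A\<close>, the other edge of the same source
    is \<open>B\<close> and the other source's outputs are \<open>Y\<close>; the decoder sees edge 6 only through
    \<open>enc6 (enc3 x1 x2)\<close>.\<close>
  have "ln (card {..<M1}) - L4 * ln q - Pe * ln (card {..<M1}) - ln 2 \<le> mi Q w1 x1"
    using sides_indep[of "\<lambda>(w, x, _). (w, x)" "\<lambda>(_, x2, x5). (x2, x5)"] words err1 uniform(1) pos
    by (intro mi_lower_bound_of_uniform_message[OF fin, where W = w1 and A = x1 and B = x4 and Y = "\<lambda>z. (x2 z, x5 z)"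
          and D = "\<lambda>z. fst (decoded c z)" and \<psi> = "\<lambda>a b y. dec1 c b (snd y) (enc6 c (enc3 c a (fst y)))"])
       (simp_all add: decoded lessThan_empty_iff)
  then show "ln M1 - L4 * ln q - Pe * ln M1 - ln 2 \<le> lk 1"
    using leak mi_own_message by simp
  have "ln (card {..<M1}) - L1 * ln q - Pe * ln (card {..<M1}) - ln 2 \<le> mi Q w1 x4"
    using sides_indep[of "\<lambda>(w, _, x). (w, x)" "\<lambda>(_, x2, x5). (x2, x5)"] words err1 uniform(1) pos
    by (intro mi_lower_bound_of_uniform_message[OF fin, where W = w1 and A = x4 and B = x1 and Y = "\<lambda>z. (x2 z, x5 z)"
          and D = "\<lambda>z. fst (decoded c z)" and \<psi> = "\<lambda>a b y. dec1 c a (snd y) (enc6 c (enc3 c b (fst y)))"])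
       (simp_all add: decoded lessThan_empty_iff)
  then show "ln M1 - L1 * ln q - Pe * ln M1 - ln 2 \<le> lk 4"
    using leak mi_own_message by simp
  have "ln (card {..<M2}) - L5 * ln q - Pe * ln (card {..<M2}) - ln 2 \<le> mi Q w2 x2"
    using indep_rv_commute[OF sides_indep[of "\<lambda>(_, x1, x4). (x1, x4)" "\<lambda>(w, x, _). (w, x)"]] words err2 uniform(2) pos
    by (intro mi_lower_bound_of_uniform_message[OF fin, where W = w2 and A = x2 and B = x5 and Y = "\<lambda>z. (x1 z, x4 z)"
          and D = "\<lambda>z. snd (decoded c z)" and \<psi> = "\<lambda>a b y. dec2 c (snd y) b (enc6 c (enc3 c (fst y) a))"])
       (simp_all add: decoded lessThan_empty_iff)
  then show "ln M2 - L5 * ln q - Pe * ln M2 - ln 2 \<le> lk 2"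
    using leak mi_own_message by simp
  have "ln (card {..<M2}) - L2 * ln q - Pe * ln (card {..<M2}) - ln 2 \<le> mi Q w2 x5"
    using indep_rv_commute[OF sides_indep[of "\<lambda>(_, x1, x4). (x1, x4)" "\<lambda>(w, _, x). (w, x)"]] words err2 uniform(2) pos
    by (intro mi_lower_bound_of_uniform_message[OF fin, where W = w2 and A = x5 and B = x2 and Y = "\<lambda>z. (x1 z, x4 z)"
          and D = "\<lambda>z. snd (decoded c z)" and \<psi> = "\<lambda>a b y. dec2 c (snd y) a (enc6 c (enc3 c (fst y) b))"])
       (simp_all add: decoded lessThan_empty_iff)
  then show "ln M2 - L2 * ln q - Pe * ln M2 - ln 2 \<le> lk 5"
    using leak mi_own_message by simp
  have "indep_rv Q (\<lambda>z. (w1 z, x4 z)) (\<lambda>z. (w2 z, x5 z))"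
    using sides_indep[of "\<lambda>(w, _, x). (w, x)" "\<lambda>(w, _, x). (w, x)"] by simp
  then have mi_sum: "mi Q messages (\<lambda>z. (x4 z, x5 z)) = lk 4 + lk 5"
    unfolding leak mi_own_message unfolding messages by (rule mi_pair_of_indep[OF fin])
  have ln_card: "ln (card ({..<M1} \<times> {..<M2})) = ln M1 + ln M2"
    using pos by (simp add: card_cartesian_product ln_mult)
  have "ln (card ({..<M1} \<times> {..<M2})) - L6 * ln q - Pe * ln (card ({..<M1} \<times> {..<M2})) - ln 2
      \<le> mi Q messages (\<lambda>z. (x4 z, x5 z))"
    using words err uniform(3) pos
    by (intro mi_lower_bound_of_uniform_message[OF fin, where A = "\<lambda>z. (x4 z, x5 z)"
          and B = "\<lambda>z. enc6 c (enc3 c (x1 z) (x2 z))" and Y = "\<lambda>_. ()" and D = "decoded c"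
          and \<psi> = "\<lambda>a b y. (dec1 c (fst a) (snd a) b, dec2 c (fst a) (snd a) b)"])
       (simp_all add: decoded indep_rv_const lessThan_empty_iff)
  then show "ln M1 + ln M2 - L6 * ln q - Pe * (ln M1 + ln M2) - ln 2 \<le> lk 4 + lk 5"
    unfolding ln_card mi_sum .
  have "ln (card ({..<M1} \<times> {..<M2})) - L3 * ln q - Pe * ln (card ({..<M1} \<times> {..<M2})) - ln 2
      \<le> mi Q messages (\<lambda>z. (x4 z, x5 z))"
    using words err uniform(3) pos
    by (intro mi_lower_bound_of_uniform_message[OF fin, where A = "\<lambda>z. (x4 z, x5 z)"
          and B = "\<lambda>z. enc3 c (x1 z) (x2 z)" and Y = "\<lambda>_. ()" and D = "decoded c"
          and \<psi> = "\<lambda>a b y. (dec1 c (fst a) (snd a) (enc6 c b), dec2 c (fst a) (snd a) (enc6 c b))"])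
       (simp_all add: decoded indep_rv_const lessThan_empty_iff)
  then show "ln M1 + ln M2 - L3 * ln q - Pe * (ln M1 + ln M2) - ln 2 \<le> lk 4 + lk 5"
    unfolding ln_card mi_sum .
qed

lemma rate_le_capacity_of_bounds:
  fixes q :: nat and Pe lk lM :: "nat \<Rightarrow> real" and L :: "nat \<Rightarrow> nat" and R C K :: real
  assumes q: "1 < q" and lim: "Pe \<longlonglongrightarrow> 0" "lk \<longlonglongrightarrow> 0"
    and Pe: "\<And>n. 0 \<le> Pe n" "\<And>n. Pe n \<le> 1"
    and lM: "\<And>n. real n * R * ln q \<le> lM n" and L: "\<And>n. real (L n) \<le> real n * C"
    and bound: "\<And>n. lM n - L n * ln q - Pe n * lM n - K \<le> lk n"
  shows "R \<le> C"
proof -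
  have lq: "0 < ln (real q)"
    using q by simp
  have "R * ln q \<le> C * ln q"
  proof (rule LIMSEQ_le)
    show "(\<lambda>n. (1 - Pe n) * (R * ln q) - K / real n) \<longlonglongrightarrow> R * ln q"
      using lim(1) by (auto intro!: tendsto_eq_intros lim_const_over_n)
    show "(\<lambda>n. lk n / real n + C * ln q) \<longlonglongrightarrow> C * ln q"
      using tendsto_add[OF tendsto_mult[OF lim(2) lim_inverse_n] tendsto_const, of "C * ln q"]
      by (simp add: divide_inverse)
    show "\<exists>N. \<forall>n\<ge>N. (1 - Pe n) * (R * ln q) - K / real n \<le> lk n / real n + C * ln q"
    proof (intro exI allI impI)
      fix n :: nat assume "1 \<le> n"
      then have n: "0 < real n"
        by simp
      have "(1 - Pe n) * (real n * R * ln q) \<le> (1 - Pe n) * lM n"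
        using Pe lM by (intro mult_left_mono) auto
      also have "\<dots> = lM n - Pe n * lM n"
        by (simp add: left_diff_distrib)
      finally have "(1 - Pe n) * (real n * R * ln q) - K \<le> lk n + real n * C * ln q"
        using bound[of n] mult_right_mono[OF L[of n] less_imp_le[OF lq]] by linarith
      then have "((1 - Pe n) * (real n * R * ln q) - K) / real n \<le> (lk n + real n * C * ln q) / real n"
        using n by (simp add: divide_right_mono)
      then show "(1 - Pe n) * (R * ln q) - K / real n \<le> lk n / real n + C * ln q"
        using n by (simp add: diff_divide_distrib add_divide_distrib)
    qed
  qed
  then show ?thesis
    using lq by simp
qed

lemma msg_size_pos: "0 < q \<Longrightarrow> 0 < msg_size q n R"
  unfolding msg_size_def by simp

lemma ln_msg_size_ge:
  assumes "1 < q"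
  shows "real n * R * ln q \<le> ln (real (msg_size q n R))"
proof -
  have pos: "0 < real q powr (real n * R)"
    using assms by simp
  then have "ln (real q powr (real n * R)) \<le> ln (real (msg_size q n R))"
    unfolding msg_size_def by (subst ln_le_cancel_iff) auto
  then show ?thesis
    using assms by (simp add: ln_powr)
qed

lemma edge_len_le: "0 \<le> C \<Longrightarrow> real (edge_len n C) \<le> real n * C"
  unfolding edge_len_def by simp

lemma error_prob_bounds: "0 \<le> error_prob M1 M2 c" "error_prob M1 M2 c \<le> 1"
  unfolding error_prob_def by simp_all

lemma rate_bounds_of_sec_achievable:
  assumes q: "1 < q" and C: "0 \<le> C1" "0 \<le> C2" "0 \<le> C3" "0 \<le> C4" "0 \<le> C5" "0 \<le> C6"
    and ach: "sec_achievable q C1 C2 C3 C4 C5 C6 R1 R2"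
  shows "R1 \<le> C1" "R1 \<le> C4" "R2 \<le> C2" "R2 \<le> C5" "R1 + R2 \<le> C3" "R1 + R2 \<le> C6"
proof -
  obtain cs where valid: "\<And>n. code_valid q (msg_size q n R1) (msg_size q n R2)
               (edge_len n C1) (edge_len n C2) (edge_len n C3)
               (edge_len n C4) (edge_len n C5) (edge_len n C6) (cs n)"
    and err: "(\<lambda>n. error_prob (msg_size q n R1) (msg_size q n R2) (cs n)) \<longlonglongrightarrow> 0"
    and leak: "\<And>e. e \<in> {1..6} \<Longrightarrow> (\<lambda>n. leakage (msg_size q n R1) (msg_size q n R2) (cs n) e) \<longlonglongrightarrow> 0"
    using ach unfolding sec_achievable_def by blast
  define lk where "lk e n = ln 2 * leakage (msg_size q n R1) (msg_size q n R2) (cs n) e" for e n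
  have lk: "lk e \<longlonglongrightarrow> 0" if "e \<in> {1..6}" for e
    unfolding lk_def using tendsto_mult_right_zero[OF leak[OF that]] by (simp add: mult.commute)
  have lk45: "(\<lambda>n. lk 4 n + lk 5 n) \<longlonglongrightarrow> 0"
    using tendsto_add_zero[OF lk lk] by simp
  have ln_msgs: "real n * (R1 + R2) * ln q \<le> ln (msg_size q n R1) + ln (msg_size q n R2)" for n
    using ln_msg_size_ge[OF q, of n R1] ln_msg_size_ge[OF q, of n R2] by (simp add: algebra_simps)
  have q0: "0 < q"
    using q by simp
  note bounds = code_leakage_lower_bounds[OF valid msg_size_pos[OF q0] msg_size_pos[OF q0] q0, folded lk_def]
  show "R1 \<le> C4"
    by (rule rate_le_capacity_of_bounds[where lk = "lk 1" and lM = "\<lambda>n. ln (msg_size q n R1)"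
          and L = "\<lambda>n. edge_len n C4" and K = "ln 2", OF q err lk])
       (use bounds(1) error_prob_bounds ln_msg_size_ge[OF q] edge_len_le[OF C(4)] in auto)
  show "R1 \<le> C1"
    by (rule rate_le_capacity_of_bounds[where lk = "lk 4" and lM = "\<lambda>n. ln (msg_size q n R1)"
          and L = "\<lambda>n. edge_len n C1" and K = "ln 2", OF q err lk])
       (use bounds(2) error_prob_bounds ln_msg_size_ge[OF q] edge_len_le[OF C(1)] in auto)
  show "R2 \<le> C5"
    by (rule rate_le_capacity_of_bounds[where lk = "lk 2" and lM = "\<lambda>n. ln (msg_size q n R2)"
          and L = "\<lambda>n. edge_len n C5" and K = "ln 2", OF q err lk])
       (use bounds(3) error_prob_bounds ln_msg_size_ge[OF q] edge_len_le[OF C(5)] in auto)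
  show "R2 \<le> C2"
    by (rule rate_le_capacity_of_bounds[where lk = "lk 5" and lM = "\<lambda>n. ln (msg_size q n R2)"
          and L = "\<lambda>n. edge_len n C2" and K = "ln 2", OF q err lk])
       (use bounds(4) error_prob_bounds ln_msg_size_ge[OF q] edge_len_le[OF C(2)] in auto)
  show "R1 + R2 \<le> C6"
    by (rule rate_le_capacity_of_bounds[where lk = "\<lambda>n. lk 4 n + lk 5 n" and lM = "\<lambda>n. ln (msg_size q n R1) + ln (msg_size q n R2)"
          and L = "\<lambda>n. edge_len n C6" and K = "ln 2", OF q err lk45])
       (use bounds(5) error_prob_bounds ln_msgs edge_len_le[OF C(6)] in auto)
  show "R1 + R2 \<le> C3"
    by (rule rate_le_capacity_of_bounds[where lk = "\<lambda>n. lk 4 n + lk 5 n" and lM = "\<lambda>n. ln (msg_size q n R1) + ln (msg_size q n R2)"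
          and L = "\<lambda>n. edge_len n C3" and K = "ln 2", OF q err lk45])
       (use bounds(6) error_prob_bounds ln_msgs edge_len_le[OF C(3)] in auto)
qed

section \<open>Achievability by a one-time pad\<close>

fun digits :: "nat \<Rightarrow> nat \<Rightarrow> nat \<Rightarrow> nat list" where
  "digits q 0 x = []"
| "digits q (Suc L) x = x mod q # digits q L (x div q)"

fun undigits :: "nat \<Rightarrow> nat list \<Rightarrow> nat" where
  "undigits q [] = 0"
| "undigits q (d # ds) = d + q * undigits q ds"

lemma digits_in_words: "0 < q \<Longrightarrow> digits q L x \<in> words q L"
  by (induction L arbitrary: x) (auto simp: words_def)

lemma undigits_digits: "0 < q \<Longrightarrow> x < q ^ L \<Longrightarrow> undigits q (digits q L x) = x"
proof (induction L arbitrary: x)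
  case (Suc L)
  then have "x div q < q ^ L"
    by (simp add: div_less_iff_less_mult mult.commute)
  then show ?case
    using Suc by simp
qed simp

lemma mod_add_unpad:
  fixes w t M :: nat
  assumes "w < M" "t < M"
  shows "((w + t) mod M + M - t) mod M = w"
proof (cases "w + t < M")
  case True
  then show ?thesis
    using assms by simp
next
  case False
  then have "(w + t) mod M + M - t = w"
    using assms by (simp add: mod_if)
  then show ?thesis
    using assms by simp
qed

lemma map_pmf_add_mod_uniform:
  fixes w M :: nat
  assumes "w < M"
  shows "map_pmf (\<lambda>t. (w + t) mod M) (pmf_of_set {..<M}) = pmf_of_set {..<M}"
proof -
  have inj: "inj_on (\<lambda>t. (w + t) mod M) {..<M}"
  proof (rule inj_onI)
    fix x y assume "x \<in> {..<M}" "y \<in> {..<M}" "(w + x) mod M = (w + y) mod M"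
    then show "x = y"
      using mod_add_unpad[of x M w] mod_add_unpad[of y M w] assms by (simp add: add.commute)
  qed
  moreover have "(\<lambda>t. (w + t) mod M) ` {..<M} = {..<M}"
    using inj assms by (intro endo_inj_surj) auto
  ultimately show ?thesis
    using assms map_pmf_of_set_inj[OF inj] by auto
qed

text \<open>Edge words are base-\<open>q\<close> digit strings; the relay packs the two padded messages into one
  number in mixed radix \<open>(M1, M2)\<close>.\<close>
definition otp_code :: "nat \<Rightarrow> nat \<Rightarrow> nat \<Rightarrow> nat \<Rightarrow> nat \<Rightarrow> nat \<Rightarrow> nat \<Rightarrow> nat \<Rightarrow> nat \<Rightarrow> code" where
  "otp_code q M1 M2 L1 L2 L3 L4 L5 L6 = \<lparr> rnd1 = pmf_of_set {..<M1}, rnd2 = pmf_of_set {..<M2},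
     enc1 = (\<lambda>w t. digits q L1 ((w + t) mod M1)), enc4 = (\<lambda>w t. digits q L4 t),
     enc2 = (\<lambda>w t. digits q L2 ((w + t) mod M2)), enc5 = (\<lambda>w t. digits q L5 t),
     enc3 = (\<lambda>x1 x2. digits q L3 (undigits q x1 mod M1 + M1 * (undigits q x2 mod M2))),
     enc6 = (\<lambda>x3. digits q L6 (undigits q x3)),
     dec1 = (\<lambda>x4 x5 x6. (undigits q x6 mod M1 + M1 - undigits q x4) mod M1),
     dec2 = (\<lambda>x4 x5 x6. ((undigits q x6 div M1) mod M2 + M2 - undigits q x5) mod M2) \<rparr>"

lemma otp_code_valid: "0 < q \<Longrightarrow> code_valid q M1 M2 L1 L2 L3 L4 L5 L6 (otp_code q M1 M2 L1 L2 L3 L4 L5 L6)"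
  unfolding code_valid_def otp_code_def by (simp add: digits_in_words)

lemma otp_code_decodes:
  assumes q: "0 < q" and w: "w1 < M1" "w2 < M2" and t: "t1 < M1" "t2 < M2"
    and fit: "M1 \<le> q ^ L1" "M1 \<le> q ^ L4" "M2 \<le> q ^ L2" "M2 \<le> q ^ L5" "M1 * M2 \<le> q ^ L3" "M1 * M2 \<le> q ^ L6"
  defines "c \<equiv> otp_code q M1 M2 L1 L2 L3 L4 L5 L6" and "\<omega> \<equiv> (w1, w2, t1, t2)"
  shows "dec1 c (edge_sig c 4 \<omega>) (edge_sig c 5 \<omega>) (edge_sig c 6 \<omega>) = w1"
    and "dec2 c (edge_sig c 4 \<omega>) (edge_sig c 5 \<omega>) (edge_sig c 6 \<omega>) = w2"
proof -
  define a b where "a = (w1 + t1) mod M1" and "b = (w2 + t2) mod M2"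
  have ab: "a < M1" "b < M2"
    using w by (simp_all add: a_def b_def)
  have packed: "a + M1 * b < M1 * M2"
  proof -
    have "M1 * (b + 1) \<le> M1 * M2"
      using ab by (intro mult_le_mono2) simp
    then show ?thesis
      using ab by simp
  qed
  have undigits: "undigits q (digits q L1 a) = a" "undigits q (digits q L2 b) = b"
      "undigits q (digits q L4 t1) = t1" "undigits q (digits q L5 t2) = t2"
      "undigits q (digits q L3 (a + M1 * b)) = a + M1 * b" "undigits q (digits q L6 (a + M1 * b)) = a + M1 * b"
    using ab t packed fit by (intro undigits_digits[OF q]; linarith)+
  have unpack: "(a + M1 * b) mod M1 = a" "(a + M1 * b) div M1 = b"
    using ab by simp_all
  show "dec1 c (edge_sig c 4 \<omega>) (edge_sig c 5 \<omega>) (edge_sig c 6 \<omega>) = w1"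
    using mod_add_unpad[OF w(1) t(1)] ab
    by (simp add: c_def \<omega>_def otp_code_def edge_sig_def a_def[symmetric] b_def[symmetric] undigits unpack)
  show "dec2 c (edge_sig c 4 \<omega>) (edge_sig c 5 \<omega>) (edge_sig c 6 \<omega>) = w2"
    using mod_add_unpad[OF w(2) t(2)] ab
    by (simp add: c_def \<omega>_def otp_code_def edge_sig_def a_def[symmetric] b_def[symmetric] undigits unpack)
qed

lemma otp_code_error_prob:
  assumes "0 < q" "0 < M1" "0 < M2"
    and "M1 \<le> q ^ L1" "M1 \<le> q ^ L4" "M2 \<le> q ^ L2" "M2 \<le> q ^ L5" "M1 * M2 \<le> q ^ L3" "M1 * M2 \<le> q ^ L6"
  shows "error_prob M1 M2 (otp_code q M1 M2 L1 L2 L3 L4 L5 L6) = 0"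
proof -
  define c where "c = otp_code q M1 M2 L1 L2 L3 L4 L5 L6"
  define E where "E = {\<omega>. case \<omega> of (w1, w2, t1, t2) \<Rightarrow>
        (dec1 c (edge_sig c 4 \<omega>) (edge_sig c 5 \<omega>) (edge_sig c 6 \<omega>),
         dec2 c (edge_sig c 4 \<omega>) (edge_sig c 5 \<omega>) (edge_sig c 6 \<omega>)) \<noteq> (w1, w2)}"
  have "\<omega> \<notin> E" if "\<omega> \<in> set_pmf (joint_dist M1 M2 c)" for \<omega>
  proof -
    obtain w1 w2 t1 t2 where \<omega>: "\<omega> = (w1, w2, t1, t2)"
      by (cases \<omega>) auto
    have "w1 < M1" "w2 < M2" "t1 < M1" "t2 < M2"
      using that assms(2,3) by (auto simp: \<omega> joint_dist_eq_pair c_def otp_code_def set_pmf_of_set_lessThan)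
    from otp_code_decodes[OF assms(1) this assms(4-)] show ?thesis
      by (simp add: E_def \<omega> c_def)
  qed
  then have "measure (joint_dist M1 M2 c) E = 0"
    by (subst measure_pmf_zero_iff) blast
  then show ?thesis
    by (simp add: error_prob_def c_def E_def)
qed

lemma joint_dist_messages_keys:
  "map_pmf (\<lambda>(w1, w2, t1, t2). ((w1, w2), K (t1, t2))) (joint_dist M1 M2 c) =
     pair_pmf (pair_pmf (pmf_of_set {..<M1}) (pmf_of_set {..<M2})) (map_pmf K (pair_pmf (rnd1 c) (rnd2 c)))"
  unfolding joint_dist_def pair_pmf_def map_pmf_def
  by (simp add: bind_assoc_pmf bind_return_pmf)

lemma joint_dist_padded_messages:
  assumes "rnd1 c = pmf_of_set {..<M1}" "rnd2 c = pmf_of_set {..<M2}" "0 < M1" "0 < M2"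
  shows "map_pmf (\<lambda>(w1, w2, t1, t2). ((w1, w2), K ((w1 + t1) mod M1, (w2 + t2) mod M2))) (joint_dist M1 M2 c) =
         map_pmf (\<lambda>(w1, w2, t1, t2). ((w1, w2), K (t1, t2))) (joint_dist M1 M2 c)"
proof -
  have pad: "map_pmf (\<lambda>(t1, t2). ((w1, w2), K ((w1 + t1) mod M1, (w2 + t2) mod M2))) (pair_pmf (rnd1 c) (rnd2 c)) =
        map_pmf (\<lambda>(t1, t2). ((w1, w2), K (t1, t2))) (pair_pmf (rnd1 c) (rnd2 c))"
    if "w1 < M1" "w2 < M2" for w1 w2
  proof -
    have "map_pmf (\<lambda>(t1, t2). ((w1, w2), K ((w1 + t1) mod M1, (w2 + t2) mod M2))) (pair_pmf (rnd1 c) (rnd2 c)) =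
        map_pmf (\<lambda>(t1, t2). ((w1, w2), K (t1, t2)))
          (map_pmf (\<lambda>(t1, t2). ((w1 + t1) mod M1, (w2 + t2) mod M2)) (pair_pmf (rnd1 c) (rnd2 c)))"
      unfolding map_pmf_comp by (rule map_pmf_cong) auto
    also have "map_pmf (\<lambda>(t1, t2). ((w1 + t1) mod M1, (w2 + t2) mod M2)) (pair_pmf (rnd1 c) (rnd2 c)) = pair_pmf (rnd1 c) (rnd2 c)"
      using that by (simp add: map_pair assms(1,2) map_pmf_add_mod_uniform)
    finally show ?thesis .
  qed
  have joint: "map_pmf g (joint_dist M1 M2 c) = bind_pmf (pmf_of_set {..<M1}) (\<lambda>w1. bind_pmf (pmf_of_set {..<M2}) (\<lambda>w2.
      map_pmf (\<lambda>(t1, t2). g (w1, w2, t1, t2)) (pair_pmf (rnd1 c) (rnd2 c))))" for g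
    unfolding joint_dist_def pair_pmf_def map_pmf_def by (simp add: bind_assoc_pmf bind_return_pmf)
  show ?thesis
    unfolding joint using assms(3,4)
    by (intro bind_pmf_cong refl) (simp_all add: pad set_pmf_of_set_lessThan)
qed

lemma otp_code_leakage:
  assumes "0 < M1" "0 < M2"
  shows "leakage M1 M2 (otp_code q M1 M2 L1 L2 L3 L4 L5 L6) e = 0"
proof -
  define c where "c = otp_code q M1 M2 L1 L2 L3 L4 L5 L6"
  have rnd: "rnd1 c = pmf_of_set {..<M1}" "rnd2 c = pmf_of_set {..<M2}"
    by (simp_all add: c_def otp_code_def)
  define K where "K = (\<lambda>(t1, t2). edge_sig c e (if e = 4 \<or> e = 5 then (0, 0, t1, t2) else (t1, t2, 0, 0)))"
  have "map_pmf (\<lambda>\<omega>. case \<omega> of (w1, w2, t1, t2) \<Rightarrow> ((w1, w2), edge_sig c e \<omega>)) (joint_dist M1 M2 c) =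
        map_pmf (\<lambda>(w1, w2, t1, t2). ((w1, w2), K (t1, t2))) (joint_dist M1 M2 c)"
  proof (cases "e = 4 \<or> e = 5")
    case True
    then show ?thesis
      by (intro map_pmf_cong) (auto simp: K_def c_def otp_code_def edge_sig_def)
  next
    case False
    then have "map_pmf (\<lambda>\<omega>. case \<omega> of (w1, w2, t1, t2) \<Rightarrow> ((w1, w2), edge_sig c e \<omega>)) (joint_dist M1 M2 c) =
        map_pmf (\<lambda>(w1, w2, t1, t2). ((w1, w2), K ((w1 + t1) mod M1, (w2 + t2) mod M2))) (joint_dist M1 M2 c)"
      by (intro map_pmf_cong) (auto simp: K_def c_def otp_code_def edge_sig_def Let_def)
    then show ?thesis
      using joint_dist_padded_messages[OF rnd assms] by simp
  qed
  then show ?thesis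
    unfolding leakage_def c_def[symmetric] by (simp only: joint_dist_messages_keys mutual_info_pair_pmf)
qed

lemma msg_size_zero: "0 < q \<Longrightarrow> msg_size q n 0 = 1"
  by (simp add: msg_size_def)

lemma msg_size_le:
  assumes "1 < q" "0 \<le> R"
  shows "real (msg_size q n R) \<le> real q powr (real n * R + 1)"
proof -
  have one: "1 \<le> real q powr (real n * R)"
    using assms by (simp add: ge_one_powr_ge_zero)
  have "real (msg_size q n R) \<le> real q powr (real n * R) + 1"
    unfolding msg_size_def by (simp add: of_nat_ceiling)
  also have "\<dots> \<le> real q powr (real n * R) * 2"
    using one by simp
  also have "\<dots> \<le> real q powr (real n * R) * real q"
    using one assms(1) by (intro mult_left_mono) auto
  also have "\<dots> = real q powr (real n * R + 1)"
    using assms(1) by (simp add: powr_add)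
  finally show ?thesis .
qed

lemma edge_len_ge: "0 \<le> C \<Longrightarrow> real n * C - 1 \<le> real (edge_len n C)"
  unfolding edge_len_def by simp

lemma eventually_msg_sizes_fit:
  assumes q: "1 < q" and R: "0 \<le> R1" "0 \<le> R2" and C: "0 \<le> C" and fit: "R1 + R2 = 0 \<or> R1 + R2 < C"
  shows "eventually (\<lambda>n. msg_size q n R1 * msg_size q n R2 \<le> q ^ edge_len n C) sequentially"
proof (cases "R1 + R2 = 0")
  case True
  then have "R1 = 0" "R2 = 0"
    using R by linarith+
  then show ?thesis
    using q by (simp add: msg_size_zero)
next
  case False
  then have gap: "0 < C - (R1 + R2)"
    using fit by simp
  obtain N :: nat where N: "3 / (C - (R1 + R2)) < real N"
    using reals_Archimedean2 by blast
  show ?thesis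
    unfolding eventually_sequentially
  proof (intro exI allI impI)
    fix n assume "N \<le> n"
    then have "3 / (C - (R1 + R2)) < real n"
      using N by (meson less_le_trans of_nat_le_iff)
    then have "3 < real n * (C - (R1 + R2))"
      using gap by (simp add: pos_divide_less_eq)
    then have exponent: "real n * (R1 + R2) + 2 \<le> real (edge_len n C)"
      using edge_len_ge[OF C, of n] by (simp add: right_diff_distrib)
    have exponent_sum: "(real n * R1 + 1) + (real n * R2 + 1) = real n * (R1 + R2) + 2"
      by (simp add: algebra_simps)
    have "real (msg_size q n R1 * msg_size q n R2) \<le> real q powr (real n * R1 + 1) * real q powr (real n * R2 + 1)"
      unfolding of_nat_mult using q R by (intro mult_mono msg_size_le) auto
    also have "\<dots> = real q powr (real n * (R1 + R2) + 2)"
      unfolding exponent_sum[symmetric] by (simp only: powr_add)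
    also have "\<dots> \<le> real q powr real (edge_len n C)"
      using q exponent by (intro powr_mono) auto
    also have "\<dots> = real (q ^ edge_len n C)"
      using q by (simp add: powr_realpow)
    finally show "msg_size q n R1 * msg_size q n R2 \<le> q ^ edge_len n C"
      by (simp only: of_nat_le_iff)
  qed
qed

lemma eventually_msg_size_fits:
  assumes "1 < q" "0 \<le> R" "0 \<le> C" "R = 0 \<or> R < C"
  shows "eventually (\<lambda>n. msg_size q n R \<le> q ^ edge_len n C) sequentially"
  using eventually_msg_sizes_fit[of q R 0 C] assms by (simp add: msg_size_zero)

lemma sec_achievable_of_strict_rates:
  assumes q: "1 < q" and C: "0 \<le> C1" "0 \<le> C2" "0 \<le> C3" "0 \<le> C4" "0 \<le> C5" "0 \<le> C6"
    and R: "0 \<le> R1" "0 \<le> R2"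
    and fit: "R1 = 0 \<or> R1 < min C1 C4" "R2 = 0 \<or> R2 < min C2 C5" "R1 + R2 = 0 \<or> R1 + R2 < min C3 C6"
  shows "sec_achievable q C1 C2 C3 C4 C5 C6 R1 R2"
proof -
  define cs where "cs n = otp_code q (msg_size q n R1) (msg_size q n R2)
     (edge_len n C1) (edge_len n C2) (edge_len n C3) (edge_len n C4) (edge_len n C5) (edge_len n C6)" for n
  have q0: "0 < q"
    using q by simp
  have "eventually (\<lambda>n. msg_size q n R1 \<le> q ^ edge_len n C1 \<and> msg_size q n R1 \<le> q ^ edge_len n C4 \<and>
      msg_size q n R2 \<le> q ^ edge_len n C2 \<and> msg_size q n R2 \<le> q ^ edge_len n C5 \<and>
      msg_size q n R1 * msg_size q n R2 \<le> q ^ edge_len n C3 \<and> msg_size q n R1 * msg_size q n R2 \<le> q ^ edge_len n C6)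
      sequentially"
    using fit by (intro eventually_conj eventually_msg_size_fits eventually_msg_sizes_fit q R C) auto
  then have "eventually (\<lambda>n. error_prob (msg_size q n R1) (msg_size q n R2) (cs n) = 0) sequentially"
    by (rule eventually_mono) (simp add: cs_def otp_code_error_prob q0 msg_size_pos)
  then have "(\<lambda>n. error_prob (msg_size q n R1) (msg_size q n R2) (cs n)) \<longlonglongrightarrow> 0"
    by (rule tendsto_eventually)
  moreover have "leakage (msg_size q n R1) (msg_size q n R2) (cs n) e = 0" for n e
    unfolding cs_def using q0 by (simp add: otp_code_leakage msg_size_pos)
  ultimately show ?thesis
    unfolding sec_achievable_def using R q0 by (auto intro!: exI[of _ cs] otp_code_valid simp: cs_def)
qed

section \<open>The secure capacity region\<close>

lemma closure_eq_of_scaled_subset: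
  fixes A B :: "(real \<times> real) set"
  assumes "A \<subseteq> B" "closed B"
    and scaled: "\<And>R1 R2 t. (R1, R2) \<in> B \<Longrightarrow> 0 < t \<Longrightarrow> t < 1 \<Longrightarrow> (t * R1, t * R2) \<in> A"
  shows "closure A = B"
proof
  show "closure A \<subseteq> B"
    using assms(1,2) by (rule closure_minimal)
  show "B \<subseteq> closure A"
  proof
    fix x assume "x \<in> B"
    then obtain R1 R2 where x: "x = (R1, R2)" "(R1, R2) \<in> B"
      by (cases x) auto
    define t where "t n = 1 - 1 / (real n + 2)" for n :: nat
    have t: "0 < t n" "t n < 1" for n
      by (simp_all add: t_def field_simps)
    have "(\<lambda>n. 1 / (real n + 2)) \<longlonglongrightarrow> 0"
      using LIMSEQ_ignore_initial_segment[OF lim_inverse_n', of 2] by (simp add: add.commute)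
    then have "t \<longlonglongrightarrow> 1"
      unfolding t_def using tendsto_diff[OF tendsto_const, of _ 0 sequentially 1] by simp
    then have "(\<lambda>n. (t n * R1, t n * R2)) \<longlonglongrightarrow> x"
      unfolding x using tendsto_Pair[OF tendsto_mult_right tendsto_mult_right] by fastforce
    then show "x \<in> closure A"
      unfolding closure_sequential using scaled[OF x(2) t]
      by (intro exI[of _ "\<lambda>n. (t n * R1, t n * R2)"]) simp
  qed
qed

lemma scaled_rate_strict:
  fixes R C t :: real
  assumes "0 \<le> R" "R \<le> C" "0 < t" "t < 1"
  shows "t * R = 0 \<or> t * R < C"
  using assms by (cases "R = 0") (auto intro: less_le_trans[OF mult_strict_right_mono[of t 1 R]])

theorem theorem6:
  fixes q :: nat and C1 C2 C3 C4 C5 C6 C7 :: real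
  assumes "\<exists>p k. prime p \<and> 0 < k \<and> q = p ^ k"
    and "0 \<le> C1" "0 \<le> C2" "0 \<le> C3" "0 \<le> C4" "0 \<le> C5" "0 \<le> C6" "0 \<le> C7"
  shows "closure {(R1, R2). sec_achievable q C1 C2 C3 C4 C5 (C6 + C7) R1 R2} =
         {(R1, R2). 0 \<le> R1 \<and> 0 \<le> R2 \<and> R1 \<le> min C1 C4 \<and> R2 \<le> min C2 C5 \<and>
                    R1 + R2 \<le> min C3 (C6 + C7)}"
proof (rule closure_eq_of_scaled_subset)
  have q: "1 < q"
    using assms(1) by (metis one_less_power prime_gt_1_nat)
  note C = assms(2-6) add_nonneg_nonneg[OF assms(7,8)]
  show "{(R1, R2). sec_achievable q C1 C2 C3 C4 C5 (C6 + C7) R1 R2} \<subseteq>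
        {(R1, R2). 0 \<le> R1 \<and> 0 \<le> R2 \<and> R1 \<le> min C1 C4 \<and> R2 \<le> min C2 C5 \<and> R1 + R2 \<le> min C3 (C6 + C7)}"
  proof clarify
    fix R1 R2 assume ach: "sec_achievable q C1 C2 C3 C4 C5 (C6 + C7) R1 R2"
    then show "0 \<le> R1 \<and> 0 \<le> R2 \<and> R1 \<le> min C1 C4 \<and> R2 \<le> min C2 C5 \<and> R1 + R2 \<le> min C3 (C6 + C7)"
      using rate_bounds_of_sec_achievable[OF q C ach] by (simp add: sec_achievable_def)
  qed
  show "closed {(R1, R2). 0 \<le> R1 \<and> 0 \<le> R2 \<and> R1 \<le> min C1 C4 \<and> R2 \<le> min C2 C5 \<and> R1 + R2 \<le> min C3 (C6 + C7)}"
    unfolding case_prod_unfold by (intro closed_Collect_conj closed_Collect_le continuous_intros)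
  fix R1 R2 t :: real
  assume "(R1, R2) \<in> {(R1, R2). 0 \<le> R1 \<and> 0 \<le> R2 \<and> R1 \<le> min C1 C4 \<and> R2 \<le> min C2 C5 \<and> R1 + R2 \<le> min C3 (C6 + C7)}"
    and t: "0 < t" "t < 1"
  then have R: "0 \<le> R1" "0 \<le> R2" "R1 \<le> min C1 C4" "R2 \<le> min C2 C5" "R1 + R2 \<le> min C3 (C6 + C7)"
    by auto
  have "sec_achievable q C1 C2 C3 C4 C5 (C6 + C7) (t * R1) (t * R2)"
    using scaled_rate_strict[OF R(1,3) t] scaled_rate_strict[OF R(2,4) t]
      scaled_rate_strict[OF add_nonneg_nonneg[OF R(1,2)] R(5) t] R(1,2) t
    by (intro sec_achievable_of_strict_rates[OF q C]) (simp_all add: distrib_left)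
  then show "(t * R1, t * R2) \<in> {(R1, R2). sec_achievable q C1 C2 C3 C4 C5 (C6 + C7) R1 R2}"
    by simp
qed

end
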